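(* Let $1<p,q<\infty$ and $\theta_1,\theta_2>0$. There exist weight functions $a,b$ on $\mathbb R$ such that the dual space $(A_{q),\theta_2}^{p),\theta_1}(\mathbb R,a,b))^*$ is not canonically isometric to the associate space $(A_{q),\theta_2}^{p),\theta_1}(\mathbb R,a,b))'$.
   Context: A weight function on $\mathbb R^n$ is a positive, measurable, locally integrable function (vanishing at most on a set of measure zero). For $1<p<\infty$, $\theta\ge 0$ and a weight $a$, the generalized grand Lebesgue space $L_a^{p),\theta}(\mathbb R^n)$ is the space of measurable $f$ with $\|f\|_{L_a^{p),\theta}}=\sup_{0<\varepsilon\le p-1}\varepsilon^{\theta}\Big(\int_{\mathbb R^n}|f(x)|^{p-\varepsilon}a(x)^{\varepsilon/p}\,dx\Big)^{1/(p-\varepsilon)}<\infty$. The Fourier transform is $\hat f(\gamma)=\int f(x)e^{-i\langle\gamma,x\rangle}dx$, extended to tempered distributions. $A_{q),\theta_2}^{p),\theta_1}(\mathbb R^n,a,b)$ is the space of $f\in L_a^{p),\theta_1}(\mathbb R^n)$ whose Fourier transform belongs to $L_b^{q),\theta_2}(\mathbb R^n)$, with norm $\|f\|_{L_a^{p),\theta_1}}+\|\hat f\|_{L_b^{q),\theta_2}}$. The associate space $X'$ of a function space $X$ is the space of measurable $g$ with $\|g\|_{X'}=\sup\{\int|fg|\,dx:\|f\|_X\le1\}<\infty$; it embeds canonically into $X^*$ via $g\mapsto(f\mapsto\int fg\,dx)$. *)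

theory Defs
  imports "HOL-Analysis.Analysis"
begin

definition weight :: "(real \<Rightarrow> real) \<Rightarrow> bool" where
  "weight a \<longleftrightarrow> a \<in> borel_measurable lebesgue \<and> (\<forall>x. 0 \<le> a x)
     \<and> (AE x in lebesgue. 0 < a x)
     \<and> (\<forall>K. compact K \<longrightarrow> set_integrable lebesgue K a)"

definition gl_term :: "real \<Rightarrow> real \<Rightarrow> (real \<Rightarrow> real) \<Rightarrow> (real \<Rightarrow> complex) \<Rightarrow> real \<Rightarrow> ennreal" where
  "gl_term p \<theta> a f \<epsilon> =
     (let I = (\<integral>\<^sup>+ x. ennreal (cmod (f x) powr (p - \<epsilon>) * a x powr (\<epsilon> / p)) \<partial>lebesgue)
      in if I = \<infinity> then \<infinity> else ennreal (\<epsilon> powr \<theta> * enn2real I powr (1 / (p - \<epsilon>))))"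

definition gl_norm :: "real \<Rightarrow> real \<Rightarrow> (real \<Rightarrow> real) \<Rightarrow> (real \<Rightarrow> complex) \<Rightarrow> ennreal" where
  "gl_norm p \<theta> a f = (SUP \<epsilon>\<in>{0<..p - 1}. gl_term p \<theta> a f \<epsilon>)"

definition GL :: "real \<Rightarrow> real \<Rightarrow> (real \<Rightarrow> real) \<Rightarrow> (real \<Rightarrow> complex) set" where
  "GL p \<theta> a = {f. f \<in> borel_measurable lebesgue \<and> gl_norm p \<theta> a f < \<infinity>}"

primrec iter_deriv :: "nat \<Rightarrow> (real \<Rightarrow> complex) \<Rightarrow> real \<Rightarrow> complex" where
  "iter_deriv 0 \<phi> = \<phi>"
| "iter_deriv (Suc n) \<phi> = (\<lambda>x. vector_derivative (iter_deriv n \<phi>) (at x))"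

definition schwartz :: "(real \<Rightarrow> complex) \<Rightarrow> bool" where
  "schwartz \<phi> \<longleftrightarrow> (\<forall>n x. iter_deriv n \<phi> differentiable (at x))
     \<and> (\<forall>j k. bounded (range (\<lambda>x. complex_of_real (x ^ k) * iter_deriv j \<phi> x)))"

definition fourier :: "(real \<Rightarrow> complex) \<Rightarrow> real \<Rightarrow> complex" where
  "fourier \<phi> \<gamma> = (\<integral> x. \<phi> x * cis (- (\<gamma> * x)) \<partial>lebesgue)"

text \<open>g is the Fourier transform of f in the sense of tempered distributions:
  f and g act on Schwartz functions by integration and hat f(phi) = f(hat phi).\<close>
definition is_fourier_transform :: "(real \<Rightarrow> complex) \<Rightarrow> (real \<Rightarrow> complex) \<Rightarrow> bool" where
  "is_fourier_transform f g \<longleftrightarrow>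
     (\<forall>\<phi>. schwartz \<phi> \<longrightarrow>
        integrable lebesgue (\<lambda>x. f x * fourier \<phi> x) \<and>
        integrable lebesgue (\<lambda>x. g x * \<phi> x) \<and>
        (\<integral> x. g x * \<phi> x \<partial>lebesgue) = (\<integral> x. f x * fourier \<phi> x \<partial>lebesgue))"

definition A_space :: "real \<Rightarrow> real \<Rightarrow> real \<Rightarrow> real \<Rightarrow> (real \<Rightarrow> real) \<Rightarrow> (real \<Rightarrow> real)
     \<Rightarrow> (real \<Rightarrow> complex) set" where
  "A_space p \<theta>1 q \<theta>2 a b =
     {f. f \<in> GL p \<theta>1 a \<and> (\<exists>g. g \<in> GL q \<theta>2 b \<and> is_fourier_transform f g)}"

text \<open>The Fourier transform is unique a.e., so the infimum is just the norm of hat f.\<close>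
definition A_norm :: "real \<Rightarrow> real \<Rightarrow> real \<Rightarrow> real \<Rightarrow> (real \<Rightarrow> real) \<Rightarrow> (real \<Rightarrow> real)
     \<Rightarrow> (real \<Rightarrow> complex) \<Rightarrow> ennreal" where
  "A_norm p \<theta>1 q \<theta>2 a b f =
     gl_norm p \<theta>1 a f +
     (INF g\<in>{g. g \<in> GL q \<theta>2 b \<and> is_fourier_transform f g}. gl_norm q \<theta>2 b g)"

definition bounded_functional ::
  "(real \<Rightarrow> complex) set \<Rightarrow> ((real \<Rightarrow> complex) \<Rightarrow> ennreal) \<Rightarrow> ((real \<Rightarrow> complex) \<Rightarrow> complex) \<Rightarrow> bool" where
  "bounded_functional X N L \<longleftrightarrow>
     (\<forall>f\<in>X. \<forall>h\<in>X. \<forall>\<alpha> \<beta>::complex. L (\<lambda>x. \<alpha> * f x + \<beta> * h x) = \<alpha> * L f + \<beta> * L h)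
     \<and> (\<exists>C::real. \<forall>f\<in>X. ennreal (cmod (L f)) \<le> ennreal C * N f)"

definition dual_norm ::
  "(real \<Rightarrow> complex) set \<Rightarrow> ((real \<Rightarrow> complex) \<Rightarrow> ennreal) \<Rightarrow> ((real \<Rightarrow> complex) \<Rightarrow> complex) \<Rightarrow> ennreal" where
  "dual_norm X N L = (SUP f\<in>{f\<in>X. N f \<le> 1}. ennreal (cmod (L f)))"

definition assoc_norm ::
  "(real \<Rightarrow> complex) set \<Rightarrow> ((real \<Rightarrow> complex) \<Rightarrow> ennreal) \<Rightarrow> (real \<Rightarrow> complex) \<Rightarrow> ennreal" where
  "assoc_norm X N g = (SUP f\<in>{f\<in>X. N f \<le> 1}. \<integral>\<^sup>+ x. ennreal (cmod (f x * g x)) \<partial>lebesgue)"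

definition assoc_space ::
  "(real \<Rightarrow> complex) set \<Rightarrow> ((real \<Rightarrow> complex) \<Rightarrow> ennreal) \<Rightarrow> (real \<Rightarrow> complex) set" where
  "assoc_space X N = {g. g \<in> borel_measurable lebesgue \<and> assoc_norm X N g < \<infinity>}"

definition canon_embed :: "(real \<Rightarrow> complex) \<Rightarrow> (real \<Rightarrow> complex) \<Rightarrow> complex" where
  "canon_embed g = (\<lambda>f. \<integral> x. f x * g x \<partial>lebesgue)"

definition canonically_isometric ::
  "(real \<Rightarrow> complex) set \<Rightarrow> ((real \<Rightarrow> complex) \<Rightarrow> ennreal) \<Rightarrow> bool" where
  "canonically_isometric X N \<longleftrightarrow>
     (\<forall>g\<in>assoc_space X N. dual_norm X N (canon_embed g) = assoc_norm X N g) \<and>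
     (\<forall>L. bounded_functional X N L \<longrightarrow>
        (\<exists>g\<in>assoc_space X N. \<forall>f\<in>X. L f = canon_embed g f))"

end

theory Submission
  imports Defs "HOL-Probability.Characteristic_Functions" "HOL-Probability.Sinc_Integral"
    "HOL-Computational_Algebra.Polynomial"
begin

(*
  Take a = 1, b = 1 + M 1_[-T,T], and let G be the Fourier transform of the Gaussian
  g(x) = exp(-x^2/2). By the multiplication formula the functional f -> integral f G equals
  integral (hat f) g, which is bounded by the epsilon = q - 1 term of the b-weighted grand norm
  of hat f as soon as g <= K b^((q-1)/q); M and T can be chosen so for any K > 0, making the
  dual norm of the functional as small as we please. The associate norm sup integral |f G|
  only sees |f| and is therefore blind to modulations: the wave packet delta phi(x) e^(iRx)
  (phi the standard normal density) has Fourier transform centred at R, away from the heavy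
  part of b, so for large R it lies in the unit ball whatever M is, while
  integral |f G| >= delta/e.
*)

section \<open>The Gaussian is a Schwartz function\<close>

definition gauss :: "real \<Rightarrow> complex" where
  "gauss x = complex_of_real (exp (- x\<^sup>2 / 2))"

lemma gauss_borel [measurable]: "gauss \<in> borel_measurable borel"
  unfolding gauss_def by measurable

fun gauss_deriv_poly :: "nat \<Rightarrow> real poly" where
  "gauss_deriv_poly 0 = 1"
| "gauss_deriv_poly (Suc n) = pderiv (gauss_deriv_poly n) - [:0, 1:] * gauss_deriv_poly n"

lemma iter_deriv_gauss:
  "iter_deriv n gauss = (\<lambda>x. complex_of_real (poly (gauss_deriv_poly n) x * exp (- x\<^sup>2 / 2)))"
proof (induction n)
  case 0
  then show ?case by (simp add: gauss_def fun_eq_iff)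
next
  case (Suc n)
  let ?P = "gauss_deriv_poly n"
  have "((\<lambda>x. complex_of_real (poly ?P x * exp (- x\<^sup>2 / 2))) has_vector_derivative
      complex_of_real (poly (gauss_deriv_poly (Suc n)) x * exp (- x\<^sup>2 / 2))) (at x)" for x
  proof -
    have "((\<lambda>x. poly ?P x * exp (- x\<^sup>2 / 2)) has_field_derivative
        poly (pderiv ?P) x * exp (- x\<^sup>2 / 2) + poly ?P x * (exp (- x\<^sup>2 / 2) * (- (2 * x) / 2))) (at x)"
      by (auto intro!: derivative_eq_intros poly_DERIV simp: power2_eq_square)
    moreover have "poly (pderiv ?P) x * exp (- x\<^sup>2 / 2) + poly ?P x * (exp (- x\<^sup>2 / 2) * (- (2 * x) / 2))
        = poly (gauss_deriv_poly (Suc n)) x * exp (- x\<^sup>2 / 2)"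
      by (simp add: algebra_simps)
    ultimately show ?thesis by (intro has_vector_derivative_of_real) simp
  qed
  then show ?case
    unfolding iter_deriv.simps Suc.IH by (intro ext vector_derivative_at)
qed

lemma power_div_fact_le_exp:
  fixes y :: real
  assumes "0 \<le> y"
  shows "y ^ n / fact n \<le> exp y"
proof -
  have "y ^ n / fact n \<le> (\<Sum>m\<le>n. y ^ m / fact m)"
    by (rule member_le_sum) (use assms in auto)
  also have "\<dots> \<le> exp y"
    using assms summable_exp_generic[of y]
    by (auto simp: exp_def divide_inverse ac_simps intro!: sum_le_suminf)
  finally show ?thesis .
qed

lemma abs_power_mult_gauss_le:
  fixes x :: real
  shows "\<bar>x\<bar> ^ i * exp (- x\<^sup>2 / 2) \<le> 1 + 2 ^ i * fact i"
proof -
  define y where "y = x\<^sup>2 / 2"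
  have y: "0 \<le> y" by (simp add: y_def)
  have "\<bar>x\<bar> ^ i \<le> 1 + \<bar>x\<bar> ^ (2 * i)"
  proof (cases "\<bar>x\<bar> \<le> 1")
    case True
    then have "\<bar>x\<bar> ^ i \<le> 1" by (simp add: power_le_one)
    then show ?thesis using zero_le_power[of "\<bar>x\<bar>" "2 * i"] by linarith
  next
    case False
    then have "\<bar>x\<bar> ^ i \<le> \<bar>x\<bar> ^ (2 * i)" by (intro power_increasing) auto
    then show ?thesis by simp
  qed
  moreover have "\<bar>x\<bar> ^ (2 * i) = (2 * y) ^ i"
    by (simp add: y_def power_mult power2_abs)
  ultimately have "\<bar>x\<bar> ^ i * exp (- y) \<le> (1 + (2 * y) ^ i) * exp (- y)"
    by (intro mult_right_mono) auto
  also have "\<dots> = exp (- y) + 2 ^ i * (y ^ i * exp (- y))"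
    by (simp add: algebra_simps power_mult_distrib)
  also have "\<dots> \<le> 1 + 2 ^ i * fact i"
  proof -
    have "y ^ i * exp (- y) \<le> fact i"
      using power_div_fact_le_exp[OF y, of i] by (simp add: exp_minus field_simps)
    then show ?thesis using y by (intro add_mono mult_left_mono) auto
  qed
  finally show ?thesis by (simp add: y_def)
qed

lemma poly_mult_gauss_bounded:
  fixes Q :: "real poly"
  shows "\<exists>C. \<forall>x. \<bar>poly Q x * exp (- x\<^sup>2 / 2)\<bar> \<le> C"
proof (intro exI allI)
  fix x :: real
  have "\<bar>poly Q x * exp (- x\<^sup>2 / 2)\<bar> = \<bar>\<Sum>i\<le>degree Q. coeff Q i * (x ^ i * exp (- x\<^sup>2 / 2))\<bar>"
    by (simp add: poly_altdef sum_distrib_right mult.assoc)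
  also have "\<dots> \<le> (\<Sum>i\<le>degree Q. \<bar>coeff Q i\<bar> * (\<bar>x\<bar> ^ i * exp (- x\<^sup>2 / 2)))"
    by (rule order_trans[OF sum_abs]) (simp add: abs_mult power_abs)
  also have "\<dots> \<le> (\<Sum>i\<le>degree Q. \<bar>coeff Q i\<bar> * (1 + 2 ^ i * fact i))"
    by (intro sum_mono mult_left_mono abs_power_mult_gauss_le) auto
  finally show "\<bar>poly Q x * exp (- x\<^sup>2 / 2)\<bar> \<le> (\<Sum>i\<le>degree Q. \<bar>coeff Q i\<bar> * (1 + 2 ^ i * fact i))" .
qed

lemma schwartz_gauss: "schwartz gauss"
  unfolding schwartz_def
proof safe
  fix n x
  show "iter_deriv n gauss differentiable at x"
    unfolding iter_deriv_gauss
    by (intro differentiableI_vector) (auto intro!: derivative_eq_intros poly_DERIV)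
next
  fix j k
  obtain C where C: "\<And>x. \<bar>poly (monom 1 k * gauss_deriv_poly j) x * exp (- x\<^sup>2 / 2)\<bar> \<le> C"
    using poly_mult_gauss_bounded by blast
  have "cmod (complex_of_real (x ^ k) * iter_deriv j gauss x) \<le> C" for x
    using C[of x] by (simp add: iter_deriv_gauss poly_monom mult.assoc norm_mult abs_mult power_abs norm_power)
  then show "bounded (range (\<lambda>x. complex_of_real (x ^ k) * iter_deriv j gauss x))"
    unfolding bounded_iff by blast
qed

section \<open>Fourier transforms of integrable functions\<close>

lemma cis_borel [measurable]: "cis \<in> borel_measurable borel"
  by (intro borel_measurable_continuous_onI continuous_intros)

lemma schwartz_borel:
  assumes "schwartz \<phi>"
  shows "\<phi> \<in> borel_measurable borel"
proof -
  have "continuous_on UNIV \<phi>"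
    using assms unfolding schwartz_def
    by (metis continuous_at_imp_continuous_on differentiable_imp_continuous_within iter_deriv.simps(1))
  then show ?thesis by (rule borel_measurable_continuous_onI)
qed

lemma schwartz_integrable:
  assumes "schwartz \<phi>"
  shows "integrable lborel \<phi>"
proof -
  have "bounded (range (\<lambda>x. complex_of_real (x ^ 0) * iter_deriv 0 \<phi> x))"
    and "bounded (range (\<lambda>x. complex_of_real (x ^ 2) * iter_deriv 0 \<phi> x))"
    using assms unfolding schwartz_def by blast+
  then obtain C0 C2 where C0: "\<And>x. cmod (\<phi> x) \<le> C0"
    and C2: "\<And>x. cmod (complex_of_real (x ^ 2) * \<phi> x) \<le> C2"
    unfolding bounded_iff by auto
  have bound: "cmod (\<phi> x) \<le> (C0 + C2) * inverse (1 + x\<^sup>2)" for x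
  proof -
    have "cmod (\<phi> x) * (1 + x\<^sup>2) \<le> C0 + C2"
      using C0[of x] C2[of x] by (simp add: algebra_simps norm_mult norm_power)
    then show ?thesis by (simp add: field_simps add_pos_nonneg)
  qed
  have "integrable lborel (\<lambda>x::real. (C0 + C2) * inverse (1 + x\<^sup>2))"
    using integrable_inverse_1_plus_square by (simp add: einterval_def set_integrable_def)
  then show ?thesis
    by (rule Bochner_Integration.integrable_bound)
       (use schwartz_borel[OF assms] bound in \<open>auto intro: order.trans[OF _ abs_ge_self]\<close>)
qed

text \<open>Integrating over \<open>lborel\<close> rather than its completion \<open>lebesgue\<close> makes Fubini's
  theorem available.\<close>
definition fourier_lborel :: "(real \<Rightarrow> complex) \<Rightarrow> real \<Rightarrow> complex" where
  "fourier_lborel \<phi> \<gamma> = (\<integral> x. \<phi> x * cis (- (\<gamma> * x)) \<partial>lborel)"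

lemma fourier_eq_fourier_lborel:
  assumes "\<phi> \<in> borel_measurable borel"
  shows "fourier \<phi> = fourier_lborel \<phi>"
  unfolding fourier_def fourier_lborel_def
  by (intro ext integral_completion) (use assms in measurable)

lemma fourier_lborel_multiplication_formula:
  assumes wm: "w \<in> borel_measurable borel" and wi: "integrable lborel w"
    and \<phi>m: "\<phi> \<in> borel_measurable borel" and \<phi>i: "integrable lborel \<phi>"
  shows "integrable lborel (\<lambda>x. w x * fourier_lborel \<phi> x)"
    and "integrable lborel (\<lambda>\<gamma>. fourier_lborel w \<gamma> * \<phi> \<gamma>)"
    and "(\<integral> \<gamma>. fourier_lborel w \<gamma> * \<phi> \<gamma> \<partial>lborel) = (\<integral> x. w x * fourier_lborel \<phi> x \<partial>lborel)"
proof -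
  define F where "F x \<gamma> = w x * \<phi> \<gamma> * cis (- (\<gamma> * x))" for x \<gamma>
  have "(\<integral>\<^sup>+ z. ennreal (norm (case z of (x, \<gamma>) \<Rightarrow> F x \<gamma>)) \<partial>(lborel \<Otimes>\<^sub>M lborel))
      = (\<integral>\<^sup>+ z. ennreal (norm (w (fst z))) * ennreal (norm (\<phi> (snd z))) \<partial>(lborel \<Otimes>\<^sub>M lborel))"
    by (intro nn_integral_cong) (auto simp: F_def norm_mult ennreal_mult split: prod.splits)
  also have "\<dots> = (\<integral>\<^sup>+ x. \<integral>\<^sup>+ \<gamma>. ennreal (norm (w x)) * ennreal (norm (\<phi> \<gamma>)) \<partial>lborel \<partial>lborel)"
    using lborel.nn_integral_fst[of "\<lambda>z. ennreal (norm (w (fst z))) * ennreal (norm (\<phi> (snd z)))"]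
      wm \<phi>m by simp
  also have "\<dots> = (\<integral>\<^sup>+ x. ennreal (norm (w x)) \<partial>lborel) * (\<integral>\<^sup>+ \<gamma>. ennreal (norm (\<phi> \<gamma>)) \<partial>lborel)"
    using wm \<phi>m by (simp add: nn_integral_cmult nn_integral_multc)
  also have "\<dots> < \<infinity>"
    using wi \<phi>i by (simp add: integrable_iff_bounded ennreal_mult_less_top)
  moreover have "(\<lambda>(x, \<gamma>). F x \<gamma>) \<in> borel_measurable (lborel \<Otimes>\<^sub>M lborel)"
    unfolding F_def using wm \<phi>m by measurable
  ultimately have F: "integrable (lborel \<Otimes>\<^sub>M lborel) (\<lambda>(x, \<gamma>). F x \<gamma>)"
    by (simp add: integrable_iff_bounded)
  have F_x: "(\<integral> \<gamma>. F x \<gamma> \<partial>lborel) = w x * fourier_lborel \<phi> x" for x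
    unfolding fourier_lborel_def F_def by (simp add: mult.commute[of _ x] mult.assoc)
  have F_\<gamma>: "(\<integral> x. F x \<gamma> \<partial>lborel) = fourier_lborel w \<gamma> * \<phi> \<gamma>" for \<gamma>
    unfolding fourier_lborel_def F_def by (simp add: mult_ac)
  show "integrable lborel (\<lambda>x. w x * fourier_lborel \<phi> x)"
    using lborel_pair.integrable_fst[OF F] by (simp add: F_x)
  show "integrable lborel (\<lambda>\<gamma>. fourier_lborel w \<gamma> * \<phi> \<gamma>)"
    using lborel_pair.integrable_snd[OF F] by (simp add: F_\<gamma>)
  show "(\<integral> \<gamma>. fourier_lborel w \<gamma> * \<phi> \<gamma> \<partial>lborel) = (\<integral> x. w x * fourier_lborel \<phi> x \<partial>lborel)"
    using lborel_pair.Fubini_integral[OF F] by (simp add: F_x F_\<gamma>)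
qed

lemma is_fourier_transform_fourier_lborel:
  assumes wm: "w \<in> borel_measurable borel" and wi: "integrable lborel w"
  shows "is_fourier_transform w (fourier_lborel w)"
  unfolding is_fourier_transform_def
proof (intro allI impI conjI)
  fix \<phi> assume "schwartz \<phi>"
  note \<phi>m = schwartz_borel[OF this] and \<phi>i = schwartz_integrable[OF this]
  note mult = fourier_lborel_multiplication_formula[OF wm wi \<phi>m \<phi>i]
  have m1: "(\<lambda>x. w x * fourier_lborel \<phi> x) \<in> borel_measurable lborel"
    using borel_measurable_integrable[OF mult(1)] by simp
  have m2: "(\<lambda>\<gamma>. fourier_lborel w \<gamma> * \<phi> \<gamma>) \<in> borel_measurable lborel"
    using borel_measurable_integrable[OF mult(2)] by simp
  show "integrable lebesgue (\<lambda>x. w x * fourier \<phi> x)"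
    unfolding fourier_eq_fourier_lborel[OF \<phi>m] using mult(1) integrable_completion[OF m1] by simp
  show "integrable lebesgue (\<lambda>\<gamma>. fourier_lborel w \<gamma> * \<phi> \<gamma>)"
    using mult(2) integrable_completion[OF m2] by simp
  show "(\<integral> \<gamma>. fourier_lborel w \<gamma> * \<phi> \<gamma> \<partial>lebesgue) = (\<integral> x. w x * fourier \<phi> x \<partial>lebesgue)"
    unfolding fourier_eq_fourier_lborel[OF \<phi>m]
    using mult(3) integral_completion[OF m1] integral_completion[OF m2] by simp
qed

section \<open>Gaussians and Gaussian wave packets\<close>

lemma fourier_lborel_std_normal_density:
  "fourier_lborel (\<lambda>x. of_real (std_normal_density x)) t = complex_of_real (exp (- t\<^sup>2 / 2))"
proof -
  have "char std_normal_distribution (- t) = complex_of_real (exp (- t\<^sup>2 / 2))"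
    by (simp add: char_std_normal_distribution)
  moreover have "char std_normal_distribution (- t) = (\<integral>x. std_normal_density x *\<^sub>R iexp (- t * x) \<partial>lborel)"
    unfolding char_def by (subst integral_density) auto
  moreover have "std_normal_density x *\<^sub>R iexp (- t * x) = of_real (std_normal_density x) * cis (- (t * x))" for x
    by (simp add: cis_conv_exp scaleR_conv_of_real mult.commute)
  ultimately show ?thesis by (simp add: fourier_lborel_def)
qed

lemma nn_integral_normal_density: "(\<integral>\<^sup>+x. ennreal (normal_density \<mu> 1 x) \<partial>lborel) = 1"
  using prob_space.emeasure_space_1[OF prob_space_normal_density[where \<mu>=\<mu> and \<sigma>=1]]
  by (simp add: emeasure_density)

lemma std_normal_density_le_1: "std_normal_density x \<le> 1"
proof -
  have "1 / sqrt (2 * pi) \<le> 1" using pi_gt3 by simp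
  moreover have "exp (- x\<^sup>2 / 2) \<le> 1" by simp
  ultimately have "1 / sqrt (2 * pi) * exp (- x\<^sup>2 / 2) \<le> 1"
    by (intro mult_le_one) auto
  then show ?thesis unfolding std_normal_density_def by simp
qed

lemma fourier_gauss: "fourier gauss = (\<lambda>\<gamma>. complex_of_real (sqrt (2 * pi) * exp (- \<gamma>\<^sup>2 / 2)))"
proof
  fix \<gamma>
  have "fourier_lborel gauss \<gamma>
      = (\<integral>x. of_real (sqrt (2 * pi)) * (of_real (std_normal_density x) * cis (- (\<gamma> * x))) \<partial>lborel)"
    unfolding fourier_lborel_def
    by (intro Bochner_Integration.integral_cong) (simp_all add: gauss_def std_normal_density_def)
  then show "fourier gauss \<gamma> = complex_of_real (sqrt (2 * pi) * exp (- \<gamma>\<^sup>2 / 2))"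
    using fourier_lborel_std_normal_density[of \<gamma>]
    by (simp add: fourier_eq_fourier_lborel fourier_lborel_def)
qed

definition gauss_packet :: "real \<Rightarrow> real \<Rightarrow> real \<Rightarrow> complex" where
  "gauss_packet \<delta> R x = complex_of_real (\<delta> * std_normal_density x) * cis (R * x)"

lemma gauss_packet_borel [measurable]: "gauss_packet \<delta> R \<in> borel_measurable borel"
  unfolding gauss_packet_def by measurable

lemma norm_gauss_packet: "0 \<le> \<delta> \<Longrightarrow> cmod (gauss_packet \<delta> R x) = \<delta> * std_normal_density x"
  by (simp add: gauss_packet_def norm_mult)

lemma nn_integral_norm_gauss_packet:
  assumes "0 \<le> \<delta>"
  shows "(\<integral>\<^sup>+x. ennreal (cmod (gauss_packet \<delta> R x)) \<partial>lborel) = ennreal \<delta>"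
  using assms by (simp add: norm_gauss_packet ennreal_mult nn_integral_cmult nn_integral_normal_density)

lemma integrable_gauss_packet: "0 \<le> \<delta> \<Longrightarrow> integrable lborel (gauss_packet \<delta> R)"
  by (simp add: integrable_iff_bounded nn_integral_norm_gauss_packet)

lemma fourier_lborel_gauss_packet:
  "fourier_lborel (gauss_packet \<delta> R) \<gamma> = complex_of_real (\<delta> * exp (- (\<gamma> - R)\<^sup>2 / 2))"
proof -
  have "fourier_lborel (gauss_packet \<delta> R) \<gamma>
      = (\<integral>x. of_real \<delta> * (of_real (std_normal_density x) * cis (- ((\<gamma> - R) * x))) \<partial>lborel)"
    unfolding fourier_lborel_def
    by (intro Bochner_Integration.integral_cong) (simp_all add: gauss_packet_def cis_mult algebra_simps)
  then show ?thesis
    using fourier_lborel_std_normal_density[of "\<gamma> - R"] by (simp add: fourier_lborel_def)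
qed

lemma weight_const_one: "weight (\<lambda>_. 1)"
  unfolding weight_def
proof (intro conjI allI impI)
  fix K :: "real set"
  assume "compact K"
  then have "integrable lborel (\<lambda>x. indicator K x *\<^sub>R (1::real))"
    by (intro borel_integrable_compact continuous_intros)
  then show "set_integrable lebesgue K (\<lambda>_. 1::real)"
    unfolding set_integrable_def by (metis borel_measurable_integrable integrable_completion)
qed auto

definition step_weight :: "real \<Rightarrow> real \<Rightarrow> real \<Rightarrow> real" where
  "step_weight M T \<gamma> = 1 + M * indicator {-T..T} \<gamma>"

lemma step_weight_borel [measurable]: "step_weight M T \<in> borel_measurable borel"
  unfolding step_weight_def by measurable

lemma weight_step_weight:
  assumes "0 \<le> M"
  shows "weight (step_weight M T)"
  unfolding weight_def
proof (intro conjI allI impI)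
  fix K :: "real set"
  assume K: "compact K"
  then have Ks: "K \<in> sets lborel" by (simp add: borel_compact)
  have "emeasure lborel K < \<infinity>"
    using K by (intro emeasure_bounded_finite compact_imp_bounded)
  then have "integrable lborel (\<lambda>x. (1 + M) * indicator K x :: real)"
    using Ks by (intro integrable_mult_right integrable_real_indicator) auto
  then have "integrable lborel (\<lambda>x. indicator K x *\<^sub>R step_weight M T x)"
    by (rule Bochner_Integration.integrable_bound)
       (use Ks assms in \<open>auto simp: step_weight_def indicator_def\<close>)
  then show "set_integrable lebesgue K (step_weight M T)"
    unfolding set_integrable_def by (metis borel_measurable_integrable integrable_completion)
qed (use assms in \<open>auto simp: step_weight_def indicator_def intro!: add_pos_nonneg AE_I2
       measurable_completion\<close>)

lemma step_weight_dominates_gauss: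
  assumes K: "0 < K" and s: "0 < s"
  obtains M T where "0 \<le> M" "0 \<le> T" "\<And>\<gamma>. exp (- \<gamma>\<^sup>2 / 2) \<le> K * step_weight M T \<gamma> powr s"
proof
  define M where "M = (1 / K) powr (1 / s)"
  define T where "T = 2 + \<bar>ln K\<bar>"
  show "0 \<le> M" "0 \<le> T" by (auto simp: M_def T_def)
  fix \<gamma> :: real
  show "exp (- \<gamma>\<^sup>2 / 2) \<le> K * step_weight M T \<gamma> powr s"
  proof (cases "\<gamma> \<in> {-T..T}")
    case True
    have "1 / K = M powr s" using K s by (simp add: M_def powr_powr)
    also have "\<dots> \<le> (1 + M) powr s" using s by (intro powr_mono2) (auto simp: M_def)
    finally have "1 \<le> K * (1 + M) powr s"
      using K by (simp add: field_simps)
    then have "exp (- \<gamma>\<^sup>2 / 2) \<le> K * (1 + M) powr s"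
      by (rule order.trans[rotated]) simp
    then show ?thesis using True by (simp add: step_weight_def)
  next
    case False
    then have "T\<^sup>2 \<le> \<bar>\<gamma>\<bar>\<^sup>2" by (intro power_mono) (auto simp: T_def)
    moreover have "T \<le> T\<^sup>2 / 2" by (simp add: T_def power2_eq_square field_simps)
    ultimately have "- \<gamma>\<^sup>2 / 2 \<le> ln K" by (simp add: T_def)
    then have "exp (- \<gamma>\<^sup>2 / 2) \<le> K" using K by (metis exp_le_cancel_iff exp_ln)
    then show ?thesis using False by (simp add: step_weight_def)
  qed
qed

section \<open>Estimates for the generalized grand Lebesgue norm\<close>

lemma GL_memI:
  assumes "f \<in> borel_measurable lebesgue" and "gl_norm p \<theta> a f \<le> ennreal c"
  shows "f \<in> GL p \<theta> a"
  using assms unfolding GL_def by (simp add: order.strict_trans1)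

lemma gl_norm_ge_weighted_L1:
  assumes "1 < p"
  shows "ennreal ((p - 1) powr \<theta>) * (\<integral>\<^sup>+x. ennreal (cmod (f x) * a x powr ((p - 1) / p)) \<partial>lebesgue)
    \<le> gl_norm p \<theta> a f"
proof -
  let ?I = "\<integral>\<^sup>+x. ennreal (cmod (f x) * a x powr ((p - 1) / p)) \<partial>lebesgue"
  have "gl_term p \<theta> a f (p - 1) = ennreal ((p - 1) powr \<theta>) * ?I"
    using assms unfolding gl_term_def Let_def
    by (cases "?I = \<infinity>") (simp_all add: ennreal_mult_top ennreal_mult ennreal_enn2real_if)
  moreover have "gl_term p \<theta> a f (p - 1) \<le> gl_norm p \<theta> a f"
    unfolding gl_norm_def by (rule SUP_upper) (use assms in auto)
  ultimately show ?thesis by simp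
qed

lemma gl_norm_le_weighted_L1:
  assumes p: "1 < p" and \<theta>: "0 \<le> \<theta>"
    and f: "\<And>x. cmod (f x) \<le> 1" and a: "\<And>x. 1 \<le> a x"
    and y: "0 \<le> y" "y \<le> 1" and I: "(\<integral>\<^sup>+x. ennreal (cmod (f x) * a x) \<partial>lebesgue) \<le> ennreal y"
  shows "gl_norm p \<theta> a f \<le> ennreal ((p - 1) powr \<theta> * y powr (1 / p))"
  unfolding gl_norm_def
proof (rule SUP_least)
  fix \<epsilon> assume "\<epsilon> \<in> {0<..p - 1}"
  then have \<epsilon>: "0 < \<epsilon>" "\<epsilon> \<le> p - 1" by auto
  let ?I = "\<integral>\<^sup>+x. ennreal (cmod (f x) powr (p - \<epsilon>) * a x powr (\<epsilon> / p)) \<partial>lebesgue"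
  have "?I \<le> (\<integral>\<^sup>+x. ennreal (cmod (f x) * a x) \<partial>lebesgue)"
  proof (intro nn_integral_mono ennreal_leI mult_mono)
    fix x
    show "cmod (f x) powr (p - \<epsilon>) \<le> cmod (f x)"
      using powr_mono'[of 1 "p - \<epsilon>" "cmod (f x)"] f[of x] \<epsilon> by simp
    show "a x powr (\<epsilon> / p) \<le> a x"
      using powr_mono[of "\<epsilon> / p" 1 "a x"] a[of x] \<epsilon> p by simp
  qed (use a in \<open>auto intro: order.trans[OF zero_le_one]\<close>)
  with I have Iy: "?I \<le> ennreal y" by simp
  then have "enn2real ?I powr (1 / (p - \<epsilon>)) \<le> y powr (1 / (p - \<epsilon>))"
    using y \<epsilon> by (intro powr_mono2) (auto simp: enn2real_leI)
  also have "\<dots> \<le> y powr (1 / p)"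
    using y \<epsilon> p by (intro powr_mono') (auto simp: field_simps)
  finally have "\<epsilon> powr \<theta> * enn2real ?I powr (1 / (p - \<epsilon>)) \<le> (p - 1) powr \<theta> * y powr (1 / p)"
    using \<epsilon> \<theta> by (intro mult_mono powr_mono2) auto
  moreover have "?I \<noteq> \<infinity>" using Iy by (auto simp: top_unique)
  ultimately show "gl_term p \<theta> a f \<epsilon> \<le> ennreal ((p - 1) powr \<theta> * y powr (1 / p))"
    unfolding gl_term_def Let_def by (simp add: ennreal_leI)
qed

lemma norm_integral_le_gl_norm:
  assumes q: "1 < q" and c: "0 \<le> c"
    and gm: "g \<in> borel_measurable lebesgue" and bm: "b \<in> borel_measurable lebesgue"
    and gi: "integrable lebesgue (\<lambda>x. g x * \<phi> x)"
    and \<phi>: "\<And>x. cmod (\<phi> x) \<le> (q - 1) powr \<theta> * c * b x powr ((q - 1) / q)"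
  shows "ennreal (cmod (\<integral>x. g x * \<phi> x \<partial>lebesgue)) \<le> ennreal c * gl_norm q \<theta> b g"
proof -
  let ?J = "\<integral>\<^sup>+x. ennreal (cmod (g x) * b x powr ((q - 1) / q)) \<partial>lebesgue"
  have "ennreal (cmod (\<integral>x. g x * \<phi> x \<partial>lebesgue)) \<le> (\<integral>\<^sup>+x. ennreal (cmod (g x * \<phi> x)) \<partial>lebesgue)"
    by (rule integral_norm_bound_ennreal[OF gi])
  also have "\<dots> \<le> (\<integral>\<^sup>+x. ennreal c * (ennreal ((q - 1) powr \<theta>)
                          * ennreal (cmod (g x) * b x powr ((q - 1) / q))) \<partial>lebesgue)"
  proof (rule nn_integral_mono)
    fix x
    have "cmod (g x * \<phi> x) \<le> c * ((q - 1) powr \<theta> * (cmod (g x) * b x powr ((q - 1) / q)))"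
      using mult_left_mono[OF \<phi>[of x] norm_ge_zero[of "g x"]] by (simp add: norm_mult mult_ac)
    then show "ennreal (cmod (g x * \<phi> x)) \<le> ennreal c * (ennreal ((q - 1) powr \<theta>)
                 * ennreal (cmod (g x) * b x powr ((q - 1) / q)))"
      using c by (simp add: ennreal_mult[symmetric] ennreal_leI)
  qed
  also have "\<dots> = ennreal c * (ennreal ((q - 1) powr \<theta>) * ?J)"
    using gm bm by (simp add: nn_integral_cmult)
  also have "\<dots> \<le> ennreal c * gl_norm q \<theta> b g"
    by (intro mult_left_mono gl_norm_ge_weighted_L1[OF q]) simp
  finally show ?thesis .
qed

section \<open>The functional induced by the Fourier transform of the Gaussian\<close>

lemma fourier_gauss_in_assoc_space:
  assumes p: "1 < p"
  shows "fourier gauss \<in> assoc_space (A_space p \<theta>1 q \<theta>2 (\<lambda>_. 1) b) (A_norm p \<theta>1 q \<theta>2 (\<lambda>_. 1) b)"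
proof -
  let ?X = "A_space p \<theta>1 q \<theta>2 (\<lambda>_. 1) b" and ?N = "A_norm p \<theta>1 q \<theta>2 (\<lambda>_. 1) b"
  have pos: "0 < (p - 1) powr \<theta>1" using p by simp
  have "(\<integral>\<^sup>+x. ennreal (cmod (f x * fourier gauss x)) \<partial>lebesgue) \<le> ennreal (sqrt (2 * pi) / (p - 1) powr \<theta>1)"
    if f: "f \<in> ?X" "?N f \<le> 1" for f
  proof -
    have fm [measurable]: "f \<in> borel_measurable lebesgue"
      using f by (auto simp: A_space_def GL_def)
    let ?J = "\<integral>\<^sup>+x. ennreal (cmod (f x)) \<partial>lebesgue"
    have "ennreal ((p - 1) powr \<theta>1) * ?J \<le> gl_norm p \<theta>1 (\<lambda>_. 1) f"
      using gl_norm_ge_weighted_L1[OF p, of \<theta>1 f "\<lambda>_. 1"] by simp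
    also have "\<dots> \<le> ?N f"
      unfolding A_norm_def by (rule add_increasing2) auto
    finally have J: "ennreal ((p - 1) powr \<theta>1) * ?J \<le> 1"
      using f(2) by simp
    have "(\<integral>\<^sup>+x. ennreal (cmod (f x * fourier gauss x)) \<partial>lebesgue)
        \<le> (\<integral>\<^sup>+x. ennreal (sqrt (2 * pi)) * ennreal (cmod (f x)) \<partial>lebesgue)"
    proof (rule nn_integral_mono)
      fix x
      have "cmod (f x * fourier gauss x) \<le> sqrt (2 * pi) * cmod (f x)"
        using mult_left_mono[of "exp (- x\<^sup>2 / 2)" 1 "sqrt (2 * pi) * cmod (f x)"]
        by (simp add: fourier_gauss norm_mult mult_ac)
      then show "ennreal (cmod (f x * fourier gauss x)) \<le> ennreal (sqrt (2 * pi)) * ennreal (cmod (f x))"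
        by (simp add: ennreal_mult[symmetric] ennreal_leI)
    qed
    also have "\<dots> = ennreal (sqrt (2 * pi)) * ?J"
      by (rule nn_integral_cmult) measurable
    also have "\<dots> = ennreal (sqrt (2 * pi) / (p - 1) powr \<theta>1) * (ennreal ((p - 1) powr \<theta>1) * ?J)"
      using pos by (simp add: ennreal_mult[symmetric] mult.assoc[symmetric])
    also have "\<dots> \<le> ennreal (sqrt (2 * pi) / (p - 1) powr \<theta>1)"
      using mult_left_mono[OF J, of "ennreal (sqrt (2 * pi) / (p - 1) powr \<theta>1)"] by simp
    finally show ?thesis .
  qed
  then have "assoc_norm ?X ?N (fourier gauss) \<le> ennreal (sqrt (2 * pi) / (p - 1) powr \<theta>1)"
    unfolding assoc_norm_def by (intro SUP_least) auto
  moreover have "fourier gauss \<in> borel_measurable lebesgue"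
    unfolding fourier_gauss by (intro measurable_completion) simp
  ultimately show ?thesis
    unfolding assoc_space_def by (simp add: order.strict_trans1)
qed

lemma dual_norm_canon_embed_fourier_gauss_le:
  assumes q: "1 < q" and b: "weight b" and c: "0 < c"
    and dom: "\<And>\<gamma>. exp (- \<gamma>\<^sup>2 / 2) \<le> (q - 1) powr \<theta>2 * c * b \<gamma> powr ((q - 1) / q)"
  shows "dual_norm (A_space p \<theta>1 q \<theta>2 a b) (A_norm p \<theta>1 q \<theta>2 a b) (canon_embed (fourier gauss))
    \<le> ennreal c"
  unfolding dual_norm_def
proof (rule SUP_least, clarify)
  fix f assume f: "f \<in> A_space p \<theta>1 q \<theta>2 a b" "A_norm p \<theta>1 q \<theta>2 a b f \<le> 1"
  define S where "S = {g. g \<in> GL q \<theta>2 b \<and> is_fourier_transform f g}"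
  define L where "L = cmod (canon_embed (fourier gauss) f)"
  have "ennreal (L / c) \<le> gl_norm q \<theta>2 b g" if "g \<in> S" for g
  proof -
    have gm: "g \<in> borel_measurable lebesgue" and ft: "is_fourier_transform f g"
      using that by (auto simp: S_def GL_def)
    have eq: "canon_embed (fourier gauss) f = (\<integral>x. g x * gauss x \<partial>lebesgue)"
      and gi: "integrable lebesgue (\<lambda>x. g x * gauss x)"
      using ft schwartz_gauss unfolding is_fourier_transform_def canon_embed_def by auto
    have "ennreal L \<le> ennreal c * gl_norm q \<theta>2 b g"
      unfolding L_def eq using b c
      by (intro norm_integral_le_gl_norm[OF q _ gm _ gi]) (use dom in \<open>auto simp: weight_def gauss_def\<close>)
    then have "ennreal (1 / c) * ennreal L \<le> ennreal (1 / c) * ennreal c * gl_norm q \<theta>2 b g"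
      by (simp add: mult_left_mono mult.assoc)
    then show ?thesis
      using c by (simp add: ennreal_mult[symmetric] L_def)
  qed
  then have "ennreal (L / c) \<le> (INF g\<in>S. gl_norm q \<theta>2 b g)"
    by (rule INF_greatest)
  also have "\<dots> \<le> A_norm p \<theta>1 q \<theta>2 a b f"
    unfolding A_norm_def S_def by (rule add_increasing) auto
  finally have "L / c \<le> 1" using f(2) by (simp add: ennreal_le_1[symmetric] del: ennreal_le_1)
  then show "ennreal L \<le> ennreal c" using c by (simp add: field_simps ennreal_leI)
qed

lemma assoc_norm_fourier_gauss_ge:
  assumes \<delta>: "0 \<le> \<delta>" and f: "gauss_packet \<delta> R \<in> X" "N (gauss_packet \<delta> R) \<le> 1"
  shows "ennreal (\<delta> * exp (-1)) \<le> assoc_norm X N (fourier gauss)"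
proof -
  have "ennreal (\<delta> * exp (-1)) = (\<integral>\<^sup>+x. ennreal (\<delta> * exp (-1)) * indicator {0..1::real} x \<partial>lebesgue)"
    by (simp add: nn_integral_completion nn_integral_cmult_indicator)
  also have "\<dots> \<le> (\<integral>\<^sup>+x. ennreal (cmod (gauss_packet \<delta> R x * fourier gauss x)) \<partial>lebesgue)"
  proof (intro nn_integral_mono)
    fix x :: real
    have "cmod (gauss_packet \<delta> R x * fourier gauss x) = \<delta> * (exp (- x\<^sup>2 / 2) * exp (- x\<^sup>2 / 2))"
      using \<delta> by (simp add: norm_gauss_packet fourier_gauss norm_mult std_normal_density_def)
    also have "\<dots> = \<delta> * exp (- x\<^sup>2)" by (simp flip: exp_add)
    finally show "ennreal (\<delta> * exp (-1)) * indicator {0..1} x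
        \<le> ennreal (cmod (gauss_packet \<delta> R x * fourier gauss x))"
      using \<delta> by (cases "x \<in> {0..1}") (auto simp: power_le_one intro!: ennreal_leI mult_left_mono)
  qed
  also have "\<dots> \<le> assoc_norm X N (fourier gauss)"
    unfolding assoc_norm_def by (rule SUP_upper) (use f in auto)
  finally show ?thesis .
qed

section \<open>Wave packets in the unit ball\<close>

lemma fourier_gauss_packet_mult_step_weight_le:
  assumes \<delta>: "0 \<le> \<delta>" and MT: "0 \<le> M" "0 \<le> T" "T \<le> R"
  shows "cmod (fourier_lborel (gauss_packet \<delta> R) \<gamma>) * step_weight M T \<gamma>
    \<le> \<delta> * sqrt (2 * pi) * normal_density R 1 \<gamma> + \<delta> * M * (exp (- (R - T)\<^sup>2 / 2) * indicator {-T..T} \<gamma>)"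
proof -
  have far_from_R: "exp (- (\<gamma> - R)\<^sup>2 / 2) * indicator {-T..T} \<gamma>
      \<le> exp (- (R - T)\<^sup>2 / 2) * indicator {-T..T} \<gamma>"
  proof (cases "\<gamma> \<in> {-T..T}")
    case True
    then have "(R - T)\<^sup>2 \<le> (\<gamma> - R)\<^sup>2"
      using MT by (simp add: power2_commute[of \<gamma>] power_mono)
    then show ?thesis using True by simp
  qed simp
  have "cmod (fourier_lborel (gauss_packet \<delta> R) \<gamma>) * step_weight M T \<gamma>
      = \<delta> * exp (- (\<gamma> - R)\<^sup>2 / 2) + \<delta> * M * (exp (- (\<gamma> - R)\<^sup>2 / 2) * indicator {-T..T} \<gamma>)"
    using \<delta> by (simp add: fourier_lborel_gauss_packet step_weight_def norm_mult algebra_simps)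
  also have "\<dots> \<le> \<delta> * sqrt (2 * pi) * normal_density R 1 \<gamma>
      + \<delta> * M * (exp (- (R - T)\<^sup>2 / 2) * indicator {-T..T} \<gamma>)"
    using far_from_R \<delta> MT by (intro add_mono mult_left_mono) (auto simp: normal_density_def)
  finally show ?thesis .
qed

lemma nn_integral_fourier_gauss_packet_step_weight_le:
  assumes \<delta>: "0 \<le> \<delta>" and MT: "0 \<le> M" "0 \<le> T" "T \<le> R"
    and far: "M * (2 * T) * exp (- (R - T)\<^sup>2 / 2) \<le> 1"
  shows "(\<integral>\<^sup>+\<gamma>. ennreal (cmod (fourier_lborel (gauss_packet \<delta> R) \<gamma>) * step_weight M T \<gamma>) \<partial>lebesgue)
    \<le> ennreal (4 * \<delta>)"
proof -
  define E where "E = exp (- (R - T)\<^sup>2 / 2)"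
  have E: "0 \<le> E" by (simp add: E_def)
  have "(\<integral>\<^sup>+\<gamma>. ennreal (cmod (fourier_lborel (gauss_packet \<delta> R) \<gamma>) * step_weight M T \<gamma>) \<partial>lebesgue)
      \<le> (\<integral>\<^sup>+\<gamma>. ennreal (\<delta> * sqrt (2 * pi)) * ennreal (normal_density R 1 \<gamma>)
                 + ennreal (\<delta> * M * E) * indicator {-T..T} \<gamma> \<partial>lborel)"
    unfolding nn_integral_completion
  proof (intro nn_integral_mono)
    fix \<gamma>
    show "ennreal (cmod (fourier_lborel (gauss_packet \<delta> R) \<gamma>) * step_weight M T \<gamma>)
       \<le> ennreal (\<delta> * sqrt (2 * pi)) * ennreal (normal_density R 1 \<gamma>) + ennreal (\<delta> * M * E) * indicator {-T..T} \<gamma>"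
      using fourier_gauss_packet_mult_step_weight_le[OF \<delta> MT, of \<gamma>] \<delta> MT E
      by (simp add: E_def ennreal_plus[symmetric] ennreal_mult[symmetric] ennreal_indicator[symmetric]
                    ennreal_leI mult.assoc del: ennreal_plus)
  qed
  also have "\<dots> = ennreal (\<delta> * sqrt (2 * pi)) + ennreal (\<delta> * M * E) * ennreal (2 * T)"
    using MT by (subst nn_integral_add) (auto simp: nn_integral_cmult nn_integral_normal_density)
  also have "\<dots> = ennreal (\<delta> * sqrt (2 * pi)) + ennreal (\<delta> * (M * (2 * T) * E))"
    using \<delta> MT E by (simp add: ennreal_mult[symmetric] mult_ac)
  also have "\<dots> = ennreal (\<delta> * sqrt (2 * pi) + \<delta> * (M * (2 * T) * E))"
    using \<delta> MT E by (intro ennreal_plus[symmetric]) auto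
  also have "\<dots> \<le> ennreal (4 * \<delta>)"
  proof (intro ennreal_leI)
    have "sqrt (2 * pi) \<le> 3"
      using real_sqrt_le_iff[of "2 * pi" "3\<^sup>2"] pi_less_4 by simp
    then show "\<delta> * sqrt (2 * pi) + \<delta> * (M * (2 * T) * E) \<le> 4 * \<delta>"
      using mult_left_mono[OF _ \<delta>, of "sqrt (2 * pi)" 3] mult_left_mono[OF far[folded E_def] \<delta>]
      by linarith
  qed
  finally show ?thesis .
qed

lemma gl_norm_gauss_packet_le:
  assumes p: "1 < p" and \<theta>: "0 \<le> \<theta>" and \<delta>: "0 < \<delta>" "4 * \<delta> \<le> 1"
  shows "gl_norm p \<theta> (\<lambda>_. 1) (gauss_packet \<delta> R) \<le> ennreal ((p - 1) powr \<theta> * (4 * \<delta>) powr (1 / p))"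
proof (rule gl_norm_le_weighted_L1[OF p \<theta>])
  show "cmod (gauss_packet \<delta> R x) \<le> 1" for x
    using \<delta> std_normal_density_le_1[of x] by (simp add: norm_gauss_packet mult_le_one)
  show "(\<integral>\<^sup>+x. ennreal (cmod (gauss_packet \<delta> R x) * 1) \<partial>lebesgue) \<le> ennreal (4 * \<delta>)"
    using \<delta> by (simp add: nn_integral_completion nn_integral_norm_gauss_packet)
qed (use \<delta> in auto)

lemma gl_norm_fourier_gauss_packet_le:
  assumes q: "1 < q" and \<theta>: "0 \<le> \<theta>" and \<delta>: "0 < \<delta>" "4 * \<delta> \<le> 1"
    and MT: "0 \<le> M" "0 \<le> T" "T \<le> R" and far: "M * (2 * T) * exp (- (R - T)\<^sup>2 / 2) \<le> 1"
  shows "gl_norm q \<theta> (step_weight M T) (fourier_lborel (gauss_packet \<delta> R))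
    \<le> ennreal ((q - 1) powr \<theta> * (4 * \<delta>) powr (1 / q))"
proof (rule gl_norm_le_weighted_L1[OF q \<theta>])
  show "cmod (fourier_lborel (gauss_packet \<delta> R) \<gamma>) \<le> 1" for \<gamma>
    using \<delta> by (simp add: fourier_lborel_gauss_packet norm_mult mult_le_one)
  show "1 \<le> step_weight M T \<gamma>" for \<gamma>
    using MT by (simp add: step_weight_def)
  show "(\<integral>\<^sup>+\<gamma>. ennreal (cmod (fourier_lborel (gauss_packet \<delta> R) \<gamma>) * step_weight M T \<gamma>) \<partial>lebesgue)
      \<le> ennreal (4 * \<delta>)"
    using \<delta> MT far by (intro nn_integral_fourier_gauss_packet_step_weight_le) auto
qed (use \<delta> in auto)

lemma exists_far_centre:
  fixes M T :: real
  assumes "0 \<le> M" "0 \<le> T"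
  obtains R where "T \<le> R" "M * (2 * T) * exp (- (R - T)\<^sup>2 / 2) \<le> 1"
proof
  define R where "R = T + sqrt (2 * ln (1 + M * (2 * T)))"
  have pos: "0 < 1 + M * (2 * T)" using assms by (simp add: add_pos_nonneg)
  have ln: "0 \<le> ln (1 + M * (2 * T))" using assms by (intro ln_ge_zero) simp
  have "exp (- (R - T)\<^sup>2 / 2) = 1 / (1 + M * (2 * T))"
    using pos ln by (simp add: R_def exp_minus inverse_eq_divide)
  then show "M * (2 * T) * exp (- (R - T)\<^sup>2 / 2) \<le> 1"
    using pos by (simp add: divide_le_eq)
  show "T \<le> R" using ln by (simp add: R_def)
qed

lemma gauss_packet_in_unit_ball:
  assumes p: "1 < p" and q: "1 < q" and \<theta>: "0 \<le> \<theta>1" "0 \<le> \<theta>2"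
    and \<delta>: "0 < \<delta>" "4 * \<delta> \<le> 1"
    and small_p: "(p - 1) powr \<theta>1 * (4 * \<delta>) powr (1 / p) \<le> 1 / 2"
    and small_q: "(q - 1) powr \<theta>2 * (4 * \<delta>) powr (1 / q) \<le> 1 / 2"
    and MT: "0 \<le> M" "0 \<le> T"
  obtains R where "gauss_packet \<delta> R \<in> A_space p \<theta>1 q \<theta>2 (\<lambda>_. 1) (step_weight M T)"
    and "A_norm p \<theta>1 q \<theta>2 (\<lambda>_. 1) (step_weight M T) (gauss_packet \<delta> R) \<le> 1"
proof -
  obtain R where R_ge: "T \<le> R" and R_far: "M * (2 * T) * exp (- (R - T)\<^sup>2 / 2) \<le> 1"
    using exists_far_centre[OF MT] .
  let ?f = "gauss_packet \<delta> R" and ?g = "fourier_lborel (gauss_packet \<delta> R)"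
  have f_small: "gl_norm p \<theta>1 (\<lambda>_. 1) ?f \<le> ennreal (1 / 2)"
    by (rule order.trans[OF gl_norm_gauss_packet_le[OF p \<theta>(1) \<delta>] ennreal_leI[OF small_p]])
  have g_small: "gl_norm q \<theta>2 (step_weight M T) ?g \<le> ennreal (1 / 2)"
    by (rule order.trans[OF gl_norm_fourier_gauss_packet_le[OF q \<theta>(2) \<delta> MT R_ge R_far]
                            ennreal_leI[OF small_q]])
  have ft: "is_fourier_transform ?f ?g"
    using \<delta> by (intro is_fourier_transform_fourier_lborel integrable_gauss_packet) auto
  have "?g = (\<lambda>\<gamma>. complex_of_real (\<delta> * exp (- (\<gamma> - R)\<^sup>2 / 2)))"
    by (simp add: fun_eq_iff fourier_lborel_gauss_packet)
  then have "?g \<in> borel_measurable lebesgue"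
    by (simp add: measurable_completion)
  with g_small have g_GL: "?g \<in> GL q \<theta>2 (step_weight M T)"
    by (intro GL_memI)
  have "?f \<in> GL p \<theta>1 (\<lambda>_. 1)"
    by (intro GL_memI[OF _ f_small] measurable_completion) simp
  with g_GL ft have "?f \<in> A_space p \<theta>1 q \<theta>2 (\<lambda>_. 1) (step_weight M T)"
    unfolding A_space_def by blast
  moreover have "A_norm p \<theta>1 q \<theta>2 (\<lambda>_. 1) (step_weight M T) ?f \<le> 1"
  proof -
    have "A_norm p \<theta>1 q \<theta>2 (\<lambda>_. 1) (step_weight M T) ?f \<le> ennreal (1 / 2) + ennreal (1 / 2)"
      unfolding A_norm_def using f_small g_small g_GL ft
      by (intro add_mono order.trans[OF INF_lower]) auto
    also have "\<dots> = 1"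
      by (subst ennreal_plus[symmetric]) auto
    finally show ?thesis .
  qed
  ultimately show ?thesis
    by (rule that)
qed

lemma exists_small_amplitude:
  fixes c1 c2 r1 r2 :: real
  assumes "0 < r1" "0 < r2"
  obtains \<delta> where "0 < \<delta>" "4 * \<delta> \<le> 1" "c1 * (4 * \<delta>) powr r1 \<le> 1 / 2" "c2 * (4 * \<delta>) powr r2 \<le> 1 / 2"
proof -
  have small: "eventually (\<lambda>\<delta>. c * (4 * \<delta>) powr r \<le> 1 / 2) (at_right 0)" if "0 < r" for c r :: real
  proof -
    have "((\<lambda>\<delta>::real. 4 * \<delta>) \<longlongrightarrow> 0) (at_right 0)"
      by (intro tendsto_eq_intros) auto
    then have "((\<lambda>\<delta>. (4 * \<delta>) powr r) \<longlongrightarrow> 0) (at_right 0)"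
      using that by (intro tendsto_zero_powrI[where b = r])
        (auto simp: eventually_at_right_field intro!: exI[of _ 1])
    then have "((\<lambda>\<delta>. c * (4 * \<delta>) powr r) \<longlongrightarrow> 0) (at_right 0)"
      by (rule tendsto_mult_right_zero)
    then have "eventually (\<lambda>\<delta>. c * (4 * \<delta>) powr r < 1 / 2) (at_right 0)"
      by (rule order_tendstoD) simp
    then show ?thesis by (rule eventually_mono) simp
  qed
  have "eventually (\<lambda>\<delta>::real. 0 < \<delta> \<and> 4 * \<delta> \<le> 1) (at_right 0)"
    by (auto simp: eventually_at_right_field intro!: exI[of _ "1 / 4"])
  with small[OF assms(1), of c1] small[OF assms(2), of c2]
  have "eventually (\<lambda>\<delta>. 0 < \<delta> \<and> 4 * \<delta> \<le> 1 \<and> c1 * (4 * \<delta>) powr r1 \<le> 1 / 2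
                          \<and> c2 * (4 * \<delta>) powr r2 \<le> 1 / 2) (at_right (0::real))"
    by eventually_elim auto
  then show ?thesis
    using that eventually_happens'[OF trivial_limit_at_right_real] by blast
qed

theorem corollary5:
  fixes p q \<theta>1 \<theta>2 :: real
  assumes "1 < p" and "1 < q" and "0 < \<theta>1" and "0 < \<theta>2"
  shows "\<exists>a b. weight a \<and> weight b \<and>
    \<not> canonically_isometric (A_space p \<theta>1 q \<theta>2 a b) (A_norm p \<theta>1 q \<theta>2 a b)"
proof -
  obtain \<delta> where \<delta>: "0 < \<delta>" "4 * \<delta> \<le> 1"
    and small: "(p - 1) powr \<theta>1 * (4 * \<delta>) powr (1 / p) \<le> 1 / 2"
               "(q - 1) powr \<theta>2 * (4 * \<delta>) powr (1 / q) \<le> 1 / 2"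
    by (rule exists_small_amplitude[of "1 / p" "1 / q"]) (use assms in auto)
  define c where "c = \<delta> * exp (-1) / 2"
  have c: "0 < c" using \<delta> by (simp add: c_def)
  obtain M T where MT: "0 \<le> M" "0 \<le> T"
    and dom: "\<And>\<gamma>. exp (- \<gamma>\<^sup>2 / 2) \<le> (q - 1) powr \<theta>2 * c * step_weight M T \<gamma> powr ((q - 1) / q)"
    by (rule step_weight_dominates_gauss[of "(q - 1) powr \<theta>2 * c" "(q - 1) / q"]) (use c assms in auto)
  define X where "X = A_space p \<theta>1 q \<theta>2 (\<lambda>_. 1) (step_weight M T)"
  define N where "N = A_norm p \<theta>1 q \<theta>2 (\<lambda>_. 1) (step_weight M T)"
  obtain R where packet: "gauss_packet \<delta> R \<in> X" "N (gauss_packet \<delta> R) \<le> 1"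
    unfolding X_def N_def using assms(3,4)
    by (rule gauss_packet_in_unit_ball[OF assms(1,2) less_imp_le less_imp_le \<delta> small MT])
  have "dual_norm X N (canon_embed (fourier gauss)) \<le> ennreal c"
    unfolding X_def N_def
    by (rule dual_norm_canon_embed_fourier_gauss_le[OF assms(2) weight_step_weight[OF MT(1)] c dom])
  also have "\<dots> < ennreal (\<delta> * exp (-1))"
    using \<delta> by (simp add: c_def ennreal_lessI)
  also have "\<dots> \<le> assoc_norm X N (fourier gauss)"
    using \<delta> packet by (intro assoc_norm_fourier_gauss_ge) auto
  finally have "dual_norm X N (canon_embed (fourier gauss)) \<noteq> assoc_norm X N (fourier gauss)"
    by simp
  moreover have "fourier gauss \<in> assoc_space X N"
    unfolding X_def N_def by (rule fourier_gauss_in_assoc_space[OF assms(1)])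
  ultimately have "\<not> canonically_isometric X N"
    unfolding canonically_isometric_def by blast
  then show ?thesis
    using weight_const_one weight_step_weight[OF MT(1)] unfolding X_def N_def by blast
qed

end
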